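(* Let $F$ be a clause-set, and let $\mathbb{U}_F$ be the set of all $F' \subseteq F$ with $\mathrm{var}(F') = \mathrm{var}(F)$, $\delta(F') \ge 1$ and $F'$ unsatisfiable. Then $F \in \mathcal{VMU}$ if and only if $F \in \mathbb{U}_F$ and all minimal elements of $\mathbb{U}_F$ with respect to the subset relation are minimally unsatisfiable.
   Context: Literals come with a fixed-point-free involution $x \mapsto \overline{x}$; variables are positive literals. A clause is a finite set $C$ of literals with $C \cap \overline{C} = \emptyset$; a clause-set is a finite set of clauses. $\mathrm{var}(F)$, $n(F) = |\mathrm{var}(F)|$, $c(F) = |F|$, $\delta(F) = c(F) - n(F)$. $F$ is satisfiable iff some assignment of truth values makes some literal of every clause true. $F$ is minimally unsatisfiable if it is unsatisfiable and $F \setminus \{C\}$ is satisfiable for every $C \in F$. $\mathcal{VMU}$ is the class of unsatisfiable clause-sets $F$ such that every unsatisfiable $F' \subseteq F$ has $\mathrm{var}(F') = \mathrm{var}(F)$. *)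

theory Defs
  imports Main
begin

datatype 'v lit = Pos 'v | Neg 'v

fun comp :: "'v lit \<Rightarrow> 'v lit" where
  "comp (Pos v) = Neg v"
| "comp (Neg v) = Pos v"

fun var_lit :: "'v lit \<Rightarrow> 'v" where
  "var_lit (Pos v) = v"
| "var_lit (Neg v) = v"

type_synonym 'v clause = "'v lit set"
type_synonym 'v clauseset = "'v clause set"

definition is_clause :: "'v clause \<Rightarrow> bool" where
  "is_clause C \<longleftrightarrow> finite C \<and> C \<inter> comp ` C = {}"

definition is_clauseset :: "'v clauseset \<Rightarrow> bool" where
  "is_clauseset F \<longleftrightarrow> finite F \<and> (\<forall>C\<in>F. is_clause C)"

definition var :: "'v clauseset \<Rightarrow> 'v set" where
  "var F = (\<Union>C\<in>F. var_lit ` C)"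

definition n_vars :: "'v clauseset \<Rightarrow> nat" where
  "n_vars F = card (var F)"

definition c_clauses :: "'v clauseset \<Rightarrow> nat" where
  "c_clauses F = card F"

definition deficiency :: "'v clauseset \<Rightarrow> int" where
  "deficiency F = int (c_clauses F) - int (n_vars F)"

fun lit_true :: "('v \<Rightarrow> bool) \<Rightarrow> 'v lit \<Rightarrow> bool" where
  "lit_true \<phi> (Pos v) = \<phi> v"
| "lit_true \<phi> (Neg v) = (\<not> \<phi> v)"

definition satisfiable :: "'v clauseset \<Rightarrow> bool" where
  "satisfiable F \<longleftrightarrow> (\<exists>\<phi>. \<forall>C\<in>F. \<exists>x\<in>C. lit_true \<phi> x)"

definition minimally_unsat :: "'v clauseset \<Rightarrow> bool" where
  "minimally_unsat F \<longleftrightarrow> \<not> satisfiable F \<and> (\<forall>C\<in>F. satisfiable (F - {C}))"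

definition VMU :: "'v clauseset \<Rightarrow> bool" where
  "VMU F \<longleftrightarrow> \<not> satisfiable F \<and>
     (\<forall>F'. F' \<subseteq> F \<and> \<not> satisfiable F' \<longrightarrow> var F' = var F)"

definition UF :: "'v clauseset \<Rightarrow> 'v clauseset set" where
  "UF F = {F'. F' \<subseteq> F \<and> var F' = var F \<and> deficiency F' \<ge> 1 \<and> \<not> satisfiable F'}"

end

theory Submission
  imports Defs
begin

text \<open>Forward direction: every unsatisfiable subset of a VMU clause-set contains a minimally
  unsatisfiable one, which uses all variables and, by Tarsi's lemma (minimally unsatisfiable
  clause-sets have deficiency at least 1, a consequence of Hall's theorem), lies in UF F; hence F
  itself lies in UF F and each subset-minimal element of UF F is minimally unsatisfiable.

  Backward direction: if an unsatisfiable G \<subseteq> F missed a variable, take X \<supseteq> G subset-minimal with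
  all variables and positive deficiency, and M \<subseteq> X subset-minimal in UF F. Minimality of X forces
  X = M \<union> G, so M \<subset> X; removing from X a clause of M outside G keeps all variables, since M is
  minimally unsatisfiable, and keeps the deficiency positive, contradicting minimality of X.\<close>

lemma var_Un: "var (A \<union> B) = var A \<union> var B"
  by (auto simp: var_def)

lemma var_mono: "A \<subseteq> B \<Longrightarrow> var A \<subseteq> var B"
  by (auto simp: var_def)

lemma is_clauseset_subset: "is_clauseset F \<Longrightarrow> G \<subseteq> F \<Longrightarrow> is_clauseset G"
  by (auto simp: is_clauseset_def intro: finite_subset)

lemma finite_var: "is_clauseset F \<Longrightarrow> finite (var F)"
  by (auto simp: is_clauseset_def is_clause_def var_def)

lemma card_var_Un:
  assumes "finite (var A)" "finite (var B)"
  shows "card (var (A \<union> B) \<inter> U) = card (var A \<inter> U) + card (var B \<inter> (U - var A))"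
proof -
  have "var (A \<union> B) \<inter> U = (var A \<inter> U) \<union> (var B \<inter> (U - var A))"
    by (auto simp: var_Un)
  then show ?thesis
    using assms by (simp add: card_Un_disjoint disjoint_iff)
qed

lemma deficiency_mono:
  assumes "G \<subseteq> H" "finite H" "var G = var H"
  shows "deficiency G \<le> deficiency H"
  using assms card_mono[of H G] by (simp add: deficiency_def c_clauses_def n_vars_def)

lemma finite_subset_minimal:
  assumes "finite A" "P A"
  obtains M where "M \<subseteq> A" "P M" "\<And>N. N \<subset> M \<Longrightarrow> \<not> P N"
proof -
  have "finite {X. X \<subseteq> A \<and> P X}"
    using assms(1) by simp
  then obtain M where "M \<subseteq> A" "P M" and min: "\<forall>N. N \<subseteq> A \<and> P N \<longrightarrow> N \<subseteq> M \<longrightarrow> M = N"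
    using finite_has_minimal2[of "{X. X \<subseteq> A \<and> P X}" A] assms by auto
  with that show ?thesis
    by (metis psubset_imp_subset order.trans psubset_eq)
qed

definition satisfied_within :: "('v \<Rightarrow> bool) \<Rightarrow> 'v set \<Rightarrow> 'v clauseset \<Rightarrow> bool" where
  "satisfied_within \<phi> U F \<longleftrightarrow> (\<forall>C\<in>F. \<exists>x\<in>C. var_lit x \<in> U \<and> lit_true \<phi> x)"

lemma lit_true_cong: "\<phi> (var_lit x) = \<psi> (var_lit x) \<Longrightarrow> lit_true \<phi> x = lit_true \<psi> x"
  by (cases x) auto

lemma satisfiable_subset: "satisfiable F \<Longrightarrow> G \<subseteq> F \<Longrightarrow> satisfiable G"
  unfolding satisfiable_def by blast

lemma satisfied_within_imp_satisfiable: "satisfied_within \<phi> U F \<Longrightarrow> satisfiable F"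
  unfolding satisfied_within_def satisfiable_def by blast

lemma satisfiable_imp_satisfied_within_var:
  "satisfiable F \<Longrightarrow> \<exists>\<phi>. satisfied_within \<phi> (var F) F"
  by (fastforce simp: satisfied_within_def satisfiable_def var_def)

lemma satisfied_within_Int_var:
  "satisfied_within \<phi> U F \<Longrightarrow> satisfied_within \<phi> (var F \<inter> U) F"
  by (fastforce simp: satisfied_within_def var_def)

lemma satisfied_within_lit:
  "x \<in> C \<Longrightarrow> satisfied_within (\<lambda>_. case x of Pos _ \<Rightarrow> True | Neg _ \<Rightarrow> False) {var_lit x} {C}"
  by (auto simp: satisfied_within_def intro!: bexI[of _ x] split: lit.split)

lemma satisfied_within_Un:
  assumes "satisfied_within \<phi> U A" "satisfied_within \<psi> V B" "U \<inter> V = {}"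
  shows "satisfied_within (\<lambda>v. if v \<in> U then \<phi> v else \<psi> v) (U \<union> V) (A \<union> B)"
proof -
  let ?\<chi> = "\<lambda>v. if v \<in> U then \<phi> v else \<psi> v"
  have \<chi>U: "lit_true ?\<chi> x = lit_true \<phi> x" if "var_lit x \<in> U" for x
    using that by (intro lit_true_cong) simp
  have \<chi>V: "lit_true ?\<chi> x = lit_true \<psi> x" if "var_lit x \<in> V" for x
    using that assms(3) by (intro lit_true_cong) auto
  show ?thesis
    unfolding satisfied_within_def
  proof
    fix C assume "C \<in> A \<union> B"
    then show "\<exists>x\<in>C. var_lit x \<in> U \<union> V \<and> lit_true ?\<chi> x"
    proof
      assume "C \<in> A"
      then obtain x where "x \<in> C" "var_lit x \<in> U" "lit_true \<phi> x"
        using assms(1) unfolding satisfied_within_def by blast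
      with \<chi>U show ?thesis
        by blast
    next
      assume "C \<in> B"
      then obtain x where "x \<in> C" "var_lit x \<in> V" "lit_true \<psi> x"
        using assms(2) unfolding satisfied_within_def by blast
      with \<chi>V show ?thesis
        by blast
    qed
  qed
qed

lemma minimally_unsat_var_Diff:
  assumes mu: "minimally_unsat M" and C: "C \<in> M"
  shows "var (M - {C}) = var M"
proof (rule ccontr)
  assume "var (M - {C}) \<noteq> var M"
  then obtain x where x: "x \<in> C" "var_lit x \<notin> var (M - {C})"
    using C by (auto simp: var_def)
  obtain \<phi> where "satisfied_within \<phi> (var (M - {C})) (M - {C})"
    using mu C satisfiable_imp_satisfied_within_var by (auto simp: minimally_unsat_def)
  from satisfied_within_Un[OF satisfied_within_lit[OF x(1)] this] x(2)
  have "satisfiable ({C} \<union> (M - {C}))"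
    by (auto intro: satisfied_within_imp_satisfiable)
  with mu C show False
    by (simp add: minimally_unsat_def insert_absorb)
qed

definition hall_condition :: "'v set \<Rightarrow> 'v clauseset \<Rightarrow> bool" where
  "hall_condition U F \<longleftrightarrow> (\<forall>T\<subseteq>F. card T \<le> card (var T \<inter> U))"

lemma hall_condition_subset: "hall_condition U F \<Longrightarrow> G \<subseteq> F \<Longrightarrow> hall_condition U G"
  by (auto simp: hall_condition_def)

lemma hall_condition_Diff_tight:
  assumes F: "is_clauseset F" and hall: "hall_condition U F"
    and T: "T \<subseteq> F" "card (var T \<inter> U) \<le> card T"
  shows "hall_condition (U - var T) (F - T)"
  unfolding hall_condition_def
proof (intro allI impI)
  fix R assume R: "R \<subseteq> F - T"
  have T_cs: "is_clauseset T" and R_cs: "is_clauseset R"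
    using R T(1) by (auto intro: is_clauseset_subset[OF F])
  have "T \<union> R \<subseteq> F"
    using R T by blast
  then have "card (T \<union> R) \<le> card (var (T \<union> R) \<inter> U)"
    using hall by (simp add: hall_condition_def)
  moreover have "card (T \<union> R) = card T + card R"
    using R T_cs R_cs by (intro card_Un_disjoint) (auto simp: is_clauseset_def)
  moreover have "card (var (T \<union> R) \<inter> U) = card (var T \<inter> U) + card (var R \<inter> (U - var T))"
    using card_var_Un[OF finite_var[OF T_cs] finite_var[OF R_cs]] .
  ultimately show "card R \<le> card (var R \<inter> (U - var T))"
    using T(2) by linarith
qed

lemma hall_condition_Diff_clause:
  assumes F: "is_clauseset F" and C: "C \<in> F"
    and loose: "\<And>T. T \<noteq> {} \<Longrightarrow> T \<subset> F \<Longrightarrow> card T < card (var T \<inter> U)"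
  shows "hall_condition (U - {v}) (F - {C})"
  unfolding hall_condition_def
proof (intro allI impI)
  fix T assume T: "T \<subseteq> F - {C}"
  show "card T \<le> card (var T \<inter> (U - {v}))"
  proof (cases "T = {}")
    case False
    have "T \<subset> F"
      using T C by auto
    then have fin: "finite (var T)"
      using F by (meson finite_var is_clauseset_subset psubset_imp_subset)
    have "card T < card (var T \<inter> U)"
      using loose False \<open>T \<subset> F\<close> by blast
    also have "\<dots> \<le> card (insert v (var T \<inter> (U - {v})))"
      using fin by (intro card_mono) auto
    also have "\<dots> \<le> Suc (card (var T \<inter> (U - {v})))"
      using fin by (simp add: card_insert_if)
    finally show ?thesis
      by simp
  qed simp
qed

text \<open>Hall's marriage theorem for the incidence graph between clauses and the variables in U:
  the distinct representative variables of the clauses can be set independently.\<close>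

theorem hall_condition_imp_satisfied_within:
  assumes "is_clauseset F" "hall_condition U F"
  shows "\<exists>\<phi>. satisfied_within \<phi> U F"
  using assms(1)[unfolded is_clauseset_def, THEN conjunct1] assms
proof (induction F arbitrary: U rule: finite_psubset_induct)
  case (psubset F)
  note F = \<open>is_clauseset F\<close> and hall = \<open>hall_condition U F\<close>
  consider (empty) "F = {}"
    | (tight) T where "T \<noteq> {}" "T \<subset> F" "card (var T \<inter> U) \<le> card T"
    | (loose) C where "C \<in> F" "\<And>T. T \<noteq> {} \<Longrightarrow> T \<subset> F \<Longrightarrow> card T < card (var T \<inter> U)"
    by (meson all_not_in_conv not_le)
  then show ?case
  proof cases
    case empty
    then show ?thesis
      by (simp add: satisfied_within_def)
  next
    case tight
    have "T \<subseteq> F" "F - T \<subset> F"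
      using tight by auto
    obtain \<phi> where "satisfied_within \<phi> U T"
      using psubset.IH[OF \<open>T \<subset> F\<close> is_clauseset_subset[OF F \<open>T \<subseteq> F\<close>]
          hall_condition_subset[OF hall \<open>T \<subseteq> F\<close>]] ..
    then have \<phi>: "satisfied_within \<phi> (var T \<inter> U) T"
      by (rule satisfied_within_Int_var)
    obtain \<psi> where \<psi>: "satisfied_within \<psi> (U - var T) (F - T)"
      using psubset.IH[OF \<open>F - T \<subset> F\<close> is_clauseset_subset[OF F Diff_subset]
          hall_condition_Diff_tight[OF F hall \<open>T \<subseteq> F\<close> tight(3)]] ..
    have "(var T \<inter> U) \<union> (U - var T) = U" "T \<union> (F - T) = F"
      using tight by auto
    with satisfied_within_Un[OF \<phi> \<psi>] show ?thesis
      by auto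
  next
    case loose
    have "card {C} \<le> card (var {C} \<inter> U)"
      by (rule hall[unfolded hall_condition_def, rule_format]) (simp add: loose(1))
    then have "var {C} \<inter> U \<noteq> {}"
      by auto
    then obtain x where x: "x \<in> C" "var_lit x \<in> U"
      by (auto simp: var_def)
    have "F - {C} \<subset> F"
      using loose by auto
    then obtain \<psi> where \<psi>: "satisfied_within \<psi> (U - {var_lit x}) (F - {C})"
      using psubset.IH[OF _ is_clauseset_subset[OF F Diff_subset]
          hall_condition_Diff_clause[OF F loose]] by blast
    have "{var_lit x} \<union> (U - {var_lit x}) = U" "{C} \<union> (F - {C}) = F"
      using x loose by auto
    with satisfied_within_Un[OF satisfied_within_lit[OF x(1)] \<psi>] show ?thesis
      by auto
  qed
qed

lemma exists_deficiency_max_proper_subset: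
  assumes F: "is_clauseset F" "F \<noteq> {}" and "deficiency F \<le> 0"
  obtains S where "S \<subset> F" "\<And>S'. S' \<subseteq> F \<Longrightarrow> deficiency S' \<le> deficiency S"
proof -
  have "finite {S. S \<subset> F}"
    by (rule finite_subset[of _ "Pow F"]) (use F in \<open>auto simp: is_clauseset_def\<close>)
  moreover have "{} \<in> {S. S \<subset> F}"
    using F(2) by blast
  ultimately obtain S where "is_arg_min (\<lambda>S. - deficiency S) (\<lambda>S. S \<in> {S. S \<subset> F}) S"
    using ex_is_arg_min_if_finite by blast
  then have S: "S \<subset> F" and S_max: "\<And>S'. S' \<subset> F \<Longrightarrow> deficiency S' \<le> deficiency S"
    by (auto simp: is_arg_min_linorder)
  have "deficiency S' \<le> deficiency S" if "S' \<subseteq> F" for S'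
  proof (cases "S' = F")
    case True
    have "{} \<subset> F"
      using F(2) by blast
    from S_max[OF this] have "0 \<le> deficiency S"
      by (simp add: deficiency_def c_clauses_def n_vars_def var_def)
    with True show ?thesis
      using \<open>deficiency F \<le> 0\<close> by simp
  next
    case False
    with that S_max show ?thesis
      by blast
  qed
  with S show thesis
    by (rule that)
qed

lemma hall_condition_if_deficiency_max:
  assumes F: "is_clauseset F" and S: "S \<subseteq> F"
    and S_max: "\<And>S'. S' \<subseteq> F \<Longrightarrow> deficiency S' \<le> deficiency S"
  shows "hall_condition (- var S) (F - S)"
  unfolding hall_condition_def
proof (intro allI impI)
  fix T assume T: "T \<subseteq> F - S"
  have cs: "is_clauseset S" "is_clauseset T"
    using S T by (auto intro: is_clauseset_subset[OF F])
  have "card (S \<union> T) = card S + card T"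
    using cs T by (intro card_Un_disjoint) (auto simp: is_clauseset_def)
  moreover have "card (var (S \<union> T)) = card (var S) + card (var T \<inter> - var S)"
    using card_var_Un[OF finite_var finite_var, OF cs, of UNIV] by (simp add: Compl_eq_Diff_UNIV)
  moreover have "deficiency (S \<union> T) \<le> deficiency S"
    using S T by (intro S_max) auto
  ultimately show "card T \<le> card (var T \<inter> - var S)"
    by (simp add: deficiency_def c_clauses_def n_vars_def)
qed

text \<open>A proper subset S of maximal deficiency is satisfiable by minimality, and
  maximality of its deficiency is exactly Hall's condition for the remaining clauses on the
  variables outside S; the two assignments combine to satisfy F.\<close>

theorem minimally_unsat_deficiency_ge_1:
  assumes F: "is_clauseset F" and mu: "minimally_unsat F"
  shows "1 \<le> deficiency F"
proof (rule ccontr)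
  assume "\<not> 1 \<le> deficiency F"
  then have "deficiency F \<le> 0"
    by simp
  moreover have "F \<noteq> {}"
    using mu by (auto simp: minimally_unsat_def satisfiable_def)
  ultimately obtain S where S: "S \<subset> F" and S_max: "\<And>S'. S' \<subseteq> F \<Longrightarrow> deficiency S' \<le> deficiency S"
    using exists_deficiency_max_proper_subset[OF F] by blast
  obtain \<psi> where \<psi>: "satisfied_within \<psi> (- var S) (F - S)"
    using hall_condition_imp_satisfied_within[OF is_clauseset_subset[OF F Diff_subset]
        hall_condition_if_deficiency_max[OF F _ S_max]] S by blast
  obtain C where "C \<in> F" "S \<subseteq> F - {C}"
    using S by blast
  then have "satisfiable S"
    using mu satisfiable_subset by (auto simp: minimally_unsat_def)
  then obtain \<phi> where \<phi>: "satisfied_within \<phi> (var S) S"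
    using satisfiable_imp_satisfied_within_var by blast
  have "satisfiable (S \<union> (F - S))"
    using satisfied_within_Un[OF \<phi> \<psi>] by (auto intro: satisfied_within_imp_satisfiable)
  with S mu show False
    by (simp add: minimally_unsat_def Un_absorb1 psubset_imp_subset)
qed

lemma exists_minimally_unsat_subset:
  assumes "finite F" "\<not> satisfiable F"
  obtains G where "G \<subseteq> F" "minimally_unsat G"
proof -
  obtain G where G: "G \<subseteq> F" "\<not> satisfiable G" and min: "\<And>H. H \<subset> G \<Longrightarrow> satisfiable H"
    by (rule finite_subset_minimal[of F "\<lambda>G. \<not> satisfiable G", OF assms]) auto
  have "minimally_unsat G"
    unfolding minimally_unsat_def using G(2) min by blast
  with G(1) show thesis
    by (rule that)
qed

lemma minimally_unsat_unsat_subset_eq: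
  assumes mu: "minimally_unsat M" and G: "G \<subseteq> M" "\<not> satisfiable G"
  shows "G = M"
proof (rule ccontr)
  assume "G \<noteq> M"
  then obtain C where "C \<in> M" "G \<subseteq> M - {C}"
    using G(1) by blast
  with mu have "satisfiable G"
    unfolding minimally_unsat_def using satisfiable_subset by blast
  with G(2) show False ..
qed

lemma minimally_unsat_deficiency_le_Diff:
  assumes mu: "minimally_unsat M" and MX: "M \<subset> X" "finite X" "var M = var X" and C: "C \<in> M"
  shows "var (X - {C}) = var X" "deficiency M \<le> deficiency (X - {C})"
proof -
  have "var M \<subseteq> var (X - {C})"
    using minimally_unsat_var_Diff[OF mu C] var_mono[of "M - {C}" "X - {C}"] MX by auto
  then show "var (X - {C}) = var X"
    using MX var_mono[of "X - {C}" X] by auto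
  have "C \<in> X"
    using MX(1) C by blast
  then have "card M \<le> card (X - {C})"
    using psubset_card_mono[OF MX(2,1)] by (simp add: card_Diff_singleton)
  with \<open>var (X - {C}) = var X\<close> show "deficiency M \<le> deficiency (X - {C})"
    using MX by (simp add: deficiency_def c_clauses_def n_vars_def)
qed

lemma VMU_minimally_unsat_in_UF:
  assumes "is_clauseset F" "VMU F" "G \<subseteq> F" "minimally_unsat G"
  shows "G \<in> UF F"
proof -
  have "1 \<le> deficiency G"
    using minimally_unsat_deficiency_ge_1[OF is_clauseset_subset] assms by blast
  moreover have "\<not> satisfiable G"
    using assms(4) by (simp add: minimally_unsat_def)
  moreover have "var G = var F"
    using assms(2,3) \<open>\<not> satisfiable G\<close> unfolding VMU_def by blast
  ultimately show ?thesis
    using assms(3) by (simp add: UF_def)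
qed

lemma VMU_in_UF:
  assumes F: "is_clauseset F" and V: "VMU F"
  shows "F \<in> UF F"
proof -
  have "finite F" "\<not> satisfiable F"
    using F V by (auto simp: is_clauseset_def VMU_def)
  then obtain G where "G \<subseteq> F" "minimally_unsat G"
    by (rule exists_minimally_unsat_subset)
  then have "G \<in> UF F"
    using VMU_minimally_unsat_in_UF[OF F V] by blast
  then have "1 \<le> deficiency F"
    using deficiency_mono[OF \<open>G \<subseteq> F\<close> \<open>finite F\<close>] by (auto simp: UF_def)
  with \<open>\<not> satisfiable F\<close> show ?thesis
    by (simp add: UF_def)
qed

lemma VMU_minimal_UF_minimally_unsat:
  assumes F: "is_clauseset F" and V: "VMU F"
    and F': "F' \<in> UF F" and min: "\<not> (\<exists>F''\<in>UF F. F'' \<subset> F')"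
  shows "minimally_unsat F'"
proof -
  have "finite F'" "\<not> satisfiable F'"
    using F F' by (auto simp: UF_def is_clauseset_def intro: finite_subset)
  then obtain G where "G \<subseteq> F'" "minimally_unsat G"
    by (rule exists_minimally_unsat_subset)
  moreover have "G \<in> UF F"
    using VMU_minimally_unsat_in_UF[OF F V] F' \<open>G \<subseteq> F'\<close> \<open>minimally_unsat G\<close>
    by (auto simp: UF_def)
  ultimately show ?thesis
    using min by (metis psubsetI)
qed

lemma minimal_UF_minimally_unsat_imp_VMU:
  assumes F: "is_clauseset F" and FU: "F \<in> UF F"
    and min_mu: "\<And>M. M \<in> UF F \<Longrightarrow> \<not> (\<exists>N\<in>UF F. N \<subset> M) \<Longrightarrow> minimally_unsat M"
  shows "VMU F"
proof -
  have fin: "finite F"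
    using F by (simp add: is_clauseset_def)
  have "var G = var F" if G: "G \<subseteq> F" "\<not> satisfiable G" for G
  proof (rule ccontr)
    assume "var G \<noteq> var F"
    define P where "P X \<longleftrightarrow> G \<subseteq> X \<and> var X = var F \<and> 1 \<le> deficiency X" for X
    have "P F"
      using FU G(1) by (simp add: P_def UF_def)
    then obtain X where X: "X \<subseteq> F" "P X" and X_min: "\<And>Y. Y \<subset> X \<Longrightarrow> \<not> P Y"
      using finite_subset_minimal[of F P, OF fin] by blast
    have finX: "finite X"
      using X(1) fin by (rule finite_subset)
    have "\<not> satisfiable X"
      using X(2) G(2) satisfiable_subset by (auto simp: P_def)
    with X have "X \<in> UF F"
      by (simp add: P_def UF_def)
    then obtain M where M: "M \<subseteq> X" "M \<in> UF F" and M_min: "\<And>N. N \<subset> M \<Longrightarrow> N \<notin> UF F"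
      using finite_subset_minimal[of X "\<lambda>M. M \<in> UF F", OF finX] by blast
    have mu: "minimally_unsat M"
      using min_mu M_min M(2) by blast
    have varM: "var M = var F" and "1 \<le> deficiency M"
      using M(2) by (auto simp: UF_def)
    have "var G \<subseteq> var F"
      using G(1) by (rule var_mono)
    moreover have MG: "M \<union> G \<subseteq> X"
      using M(1) X(2) by (auto simp: P_def)
    ultimately have "var M = var (M \<union> G)"
      using varM by (auto simp: var_Un)
    then have "deficiency M \<le> deficiency (M \<union> G)"
      using finite_subset[OF MG finX] by (intro deficiency_mono) auto
    then have "P (M \<union> G)"
      using \<open>var M = var (M \<union> G)\<close> \<open>1 \<le> deficiency M\<close> varM by (simp add: P_def)
    with MG have X_eq: "X = M \<union> G"
      using X_min by blast
    have "\<not> G \<subseteq> M"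
      using minimally_unsat_unsat_subset_eq[OF mu _ G(2)] varM \<open>var G \<noteq> var F\<close> by blast
    then have "M \<subset> X"
      using X_eq by blast
    obtain C where C: "C \<in> M" "C \<notin> G"
      using var_mono[of M G] varM \<open>var G \<subseteq> var F\<close> \<open>var G \<noteq> var F\<close> by blast
    have "P (X - {C})"
      using minimally_unsat_deficiency_le_Diff[OF mu \<open>M \<subset> X\<close> finX _ C(1)] X(2) varM C(2)
        \<open>1 \<le> deficiency M\<close> by (auto simp: P_def)
    moreover have "X - {C} \<subset> X"
      using C(1) M(1) by blast
    ultimately show False
      using X_min by blast
  qed
  moreover have "\<not> satisfiable F"
    using FU by (simp add: UF_def)
  ultimately show ?thesis
    unfolding VMU_def by blast
qed

theorem lemma4p5:
  fixes F :: "'v clauseset"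
  assumes "is_clauseset F"
  shows "VMU F \<longleftrightarrow>
           (F \<in> UF F \<and>
            (\<forall>F'\<in>UF F. (\<not> (\<exists>F''\<in>UF F. F'' \<subset> F')) \<longrightarrow> minimally_unsat F'))"
  using VMU_in_UF[OF assms] VMU_minimal_UF_minimally_unsat[OF assms]
    minimal_UF_minimally_unsat_imp_VMU[OF assms] by blast

end
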